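(* Let $n\geq 2$ be an integer and let $D\subset\{0,1,\ldots,n^2\}$ be such that $\Delta:=D-D$ is sparse. Let $k\geq1$ and let $(\delta_1,\ldots,\delta_k),(\delta_1',\ldots,\delta_k')\in\Delta^k$ with $\delta_j\neq\delta_j'$ for some $1\le j\le k$. Then the $k$-tiles $\mathcal{E}_{\delta_1,\ldots,\delta_k}$ and $\mathcal{E}_{\delta_1',\ldots,\delta_k'}$ of $\mathcal{E}_n$ are disjoint.
   Context: Let $b:=-n+i$. $\mathcal{E}_n$ is the attractor of $\{z\mapsto b^{-1}(z+\delta): \delta\in\{0,\pm1,\ldots,\pm n^2\}\}$, i.e. $\mathcal{E}_n=\{\sum_{j\ge1}\delta_jb^{-j}: \delta_j\in\{-n^2,\ldots,n^2\}\}$. For $\delta_1,\ldots,\delta_k\in\{-n^2,\ldots,n^2\}$, the $k$-tile $\mathcal{E}_{\delta_1,\ldots,\delta_k}$ is $\{\sum_{j=1}^k\delta_jb^{-j}+b^{-k}e: e\in\mathcal{E}_n\}$. $\Delta$ is called sparse if for all $\delta\neq\delta'$ in $\Delta$, $|\delta-\delta'|>2$ when $n\geq5$, and $|\delta-\delta'|>3$ when $n\in\{2,3,4\}$. *)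

theory Defs
  imports Complex_Main
begin

definition base :: "nat \<Rightarrow> complex" where
  "base n = Complex (- real n) 1"

text \<open>The attractor E_n: all sums  sum_{j>=1} delta_j b^{-j}  with digits
  delta_j in {-n^2..n^2}.  The digit sequence is indexed from 0, so d j is delta_{j+1}.\<close>
definition attractor :: "nat \<Rightarrow> complex set" where
  "attractor n = {(\<Sum>j. of_int (d j) * inverse (base n) ^ (Suc j)) | d.
      \<forall>j. d j \<in> {- int (n^2) .. int (n^2)}}"

definition tile :: "nat \<Rightarrow> int list \<Rightarrow> complex set" where
  "tile n ds = {(\<Sum>j<length ds. of_int (ds ! j) * inverse (base n) ^ (Suc j))
                 + inverse (base n) ^ (length ds) * e | e. e \<in> attractor n}"

definition sparse :: "nat \<Rightarrow> int set \<Rightarrow> bool" where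
  "sparse n \<Delta> \<longleftrightarrow> (\<forall>\<delta>\<in>\<Delta>. \<forall>\<delta>'\<in>\<Delta>. \<delta> \<noteq> \<delta>' \<longrightarrow>
      (if n \<ge> 5 then \<bar>\<delta> - \<delta>'\<bar> > 2 else \<bar>\<delta> - \<delta>'\<bar> > 3))"

definition diffset :: "int set \<Rightarrow> int set" where
  "diffset D = {d - d' | d d'. d \<in> D \<and> d' \<in> D}"

end

(*
  If two distinct k-tiles met, subtracting the two digit expansions of a common point
  would give an expansion sum_j h_j b^{-(j+1)} = 0 with digits |h_j| \<le> 2 n^2 whose
  first nonzero digit h_j is a nonzero element of Delta - Delta.

  The values of all such expansions lie in a box [-A, A] x [-B, B], since the box is
  invariant under the contractions z \<mapsto> (g + z) / b, |g| \<le> 2 n^2. Multiplying the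
  vanishing expansion twice by b expresses -b h_j - h_{j+1} as the value of a tail
  expansion; as Im b = 1, its imaginary part is -h_j. Hence |h_j| \<le> B, and B can be
  taken below 3 for n \<ge> 5 and below 4 for n = 3, 4, contradicting sparseness. For
  n = 2 one more multiplication by b gives the bound |4 h_j - h_{j+1}| \<le> 5.
*)
theory Submission imports Defs begin

definition radix_sum :: "nat \<Rightarrow> (nat \<Rightarrow> int) \<Rightarrow> complex" where
  "radix_sum n h = (\<Sum>j. of_int (h j) * inverse (base n) ^ Suc j)"

lemma base_nonzero: "base n \<noteq> 0"
  by (simp add: base_def complex_eq_iff)

lemma Re_base_mult: "Re (base n * w) = - real n * Re w - Im w"
  and Im_base_mult: "Im (base n * w) = Re w - real n * Im w"
  by (simp_all add: base_def)

lemma norm_inverse_base_less_1: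
  assumes "n \<ge> 1" shows "norm (inverse (base n)) < 1"
proof -
  have "1 < sqrt (real n ^ 2 + 1)" using assms by simp
  also have "\<dots> = norm (base n)" by (simp add: base_def complex_norm)
  finally show ?thesis by (simp add: norm_inverse inverse_less_1_iff)
qed

lemma summable_radix_sum:
  assumes "n \<ge> 1" and "\<And>j. \<bar>h j\<bar> \<le> M"
  shows "summable (\<lambda>j. of_int (h j) * inverse (base n) ^ Suc j)"
proof (rule summable_comparison_test')
  let ?c = "norm (inverse (base n))"
  show "summable (\<lambda>j. (of_int M * ?c) * ?c ^ j)"
    using norm_inverse_base_less_1[OF assms(1)] by (intro summable_mult summable_geometric) simp
  fix j
  have "norm (of_int (h j) * inverse (base n) ^ Suc j) = of_int \<bar>h j\<bar> * ?c ^ Suc j"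
    by (simp add: norm_mult norm_power)
  also have "\<dots> \<le> of_int M * ?c ^ Suc j"
    using assms(2)[of j] by (intro mult_right_mono) auto
  finally show "norm (of_int (h j) * inverse (base n) ^ Suc j) \<le> (of_int M * ?c) * ?c ^ j"
    by (simp add: mult_ac)
qed

lemma radix_sum_split:
  assumes "n \<ge> 1" and "\<And>j. \<bar>h j\<bar> \<le> M"
  shows "radix_sum n h = (\<Sum>j<k. of_int (h j) * inverse (base n) ^ Suc j)
                         + inverse (base n) ^ k * radix_sum n (\<lambda>j. h (j + k))"
proof -
  let ?b = "inverse (base n)"
  have "radix_sum n h = (\<Sum>j. of_int (h (j + k)) * ?b ^ Suc (j + k))
                        + (\<Sum>j<k. of_int (h j) * ?b ^ Suc j)"
    unfolding radix_sum_def by (rule suminf_split_initial_segment[OF summable_radix_sum[OF assms]])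
  also have "(\<Sum>j. of_int (h (j + k)) * ?b ^ Suc (j + k))
             = (\<Sum>j. ?b ^ k * (of_int (h (j + k)) * ?b ^ Suc j))"
    by (simp add: power_add mult_ac)
  also have "\<dots> = ?b ^ k * radix_sum n (\<lambda>j. h (j + k))"
    unfolding radix_sum_def using assms by (intro suminf_mult summable_radix_sum) auto
  finally show ?thesis by simp
qed

lemma base_mult_radix_sum:
  assumes "n \<ge> 1" and "\<And>j. \<bar>h j\<bar> \<le> M"
  shows "base n * radix_sum n h = of_int (h 0) + radix_sum n (\<lambda>j. h (Suc j))"
  using radix_sum_split[OF assms, where k=1] base_nonzero[of n] by (simp add: field_simps)

lemma radix_sum_diff:
  assumes "n \<ge> 1" and "\<And>j. \<bar>h j\<bar> \<le> M" and "\<And>j. \<bar>h' j\<bar> \<le> M'"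
  shows "radix_sum n h - radix_sum n h' = radix_sum n (\<lambda>j. h j - h' j)"
  unfolding radix_sum_def of_int_diff left_diff_distrib
  by (rule suminf_diff[OF summable_radix_sum[OF assms(1,2)] summable_radix_sum[OF assms(1,3)]])

lemma base_mult_preserves_box:
  fixes A B M :: real
  assumes eq: "base n * w = of_int g + z"
    and z: "\<bar>Re z\<bar> \<le> A" "\<bar>Im z\<bar> \<le> B" and g: "\<bar>of_int g\<bar> \<le> M"
    and A_cond: "real n * (A + M) + B \<le> A * (real n ^ 2 + 1)"
    and B_cond: "A + M + real n * B \<le> B * (real n ^ 2 + 1)"
  shows "\<bar>Re w\<bar> \<le> A \<and> \<bar>Im w\<bar> \<le> B"
proof -
  let ?x = "of_int g + Re z"
  have Re_eq: "- real n * Re w - Im w = ?x" and Im_eq: "Re w - real n * Im w = Im z"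
    using arg_cong[OF eq, of Re] arg_cong[OF eq, of Im] unfolding Re_base_mult Im_base_mult by simp_all
  have "(real n ^ 2 + 1) * Re w = - real n * (- real n * Re w - Im w) + (Re w - real n * Im w)"
    by (simp add: algebra_simps power2_eq_square)
  then have Re_w: "(real n ^ 2 + 1) * Re w = - real n * ?x + Im z"
    unfolding Re_eq Im_eq .
  have "(real n ^ 2 + 1) * Im w = - (- real n * Re w - Im w) - real n * (Re w - real n * Im w)"
    by (simp add: algebra_simps power2_eq_square)
  then have Im_w: "(real n ^ 2 + 1) * Im w = - ?x - real n * Im z"
    unfolding Re_eq Im_eq .
  have x: "\<bar>?x\<bar> \<le> M + A" using g z(1) by linarith
  have pos: "real n ^ 2 + 1 > 0" by (simp add: add_nonneg_pos)
  have "(real n ^ 2 + 1) * \<bar>Re w\<bar> \<le> real n * \<bar>?x\<bar> + \<bar>Im z\<bar>"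
    using Re_w abs_triangle_ineq[of "- real n * ?x" "Im z"] pos by (simp add: abs_mult)
  also have "\<dots> \<le> A * (real n ^ 2 + 1)"
    using mult_left_mono[OF x, of "real n"] z(2) A_cond by (simp add: algebra_simps)
  finally have Re_bound: "\<bar>Re w\<bar> \<le> A" using pos by (simp add: mult.commute)
  have "(real n ^ 2 + 1) * \<bar>Im w\<bar> \<le> \<bar>?x\<bar> + real n * \<bar>Im z\<bar>"
    using Im_w abs_triangle_ineq4[of "- ?x" "real n * Im z"] pos by (simp add: abs_mult)
  also have "\<dots> \<le> B * (real n ^ 2 + 1)"
    using mult_left_mono[OF z(2), of "real n"] x B_cond by (simp add: algebra_simps)
  finally have "\<bar>Im w\<bar> \<le> B" using pos by (simp add: mult.commute)
  with Re_bound show ?thesis ..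
qed

lemma radix_sum_in_box:
  fixes A B :: real
  assumes n: "n \<ge> 1" and h: "\<And>j. \<bar>h j\<bar> \<le> M"
    and "A \<ge> 0" "B \<ge> 0"
    and "real n * (A + of_int M) + B \<le> A * (real n ^ 2 + 1)"
    and "A + of_int M + real n * B \<le> B * (real n ^ 2 + 1)"
  shows "\<bar>Re (radix_sum n h)\<bar> \<le> A \<and> \<bar>Im (radix_sum n h)\<bar> \<le> B"
proof -
  define partial where
    "partial m h = (\<Sum>j<m. of_int (h j) * inverse (base n) ^ Suc j :: complex)" for m h
  have partial_in_box: "\<bar>Re (partial m h)\<bar> \<le> A \<and> \<bar>Im (partial m h)\<bar> \<le> B"
    if "\<And>j. \<bar>h j\<bar> \<le> M" for m h
    using that
  proof (induction m arbitrary: h)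
    case 0
    then show ?case using assms(3,4) by (simp add: partial_def)
  next
    case (Suc m)
    have "partial (Suc m) h = inverse (base n) * (of_int (h 0) + partial m (\<lambda>j. h (Suc j)))"
      unfolding partial_def sum.lessThan_Suc_shift distrib_left sum_distrib_left by (simp add: mult_ac)
    then have "base n * partial (Suc m) h = of_int (h 0) + partial m (\<lambda>j. h (Suc j))"
      using base_nonzero[of n] by simp
    moreover have "\<bar>of_int (h 0) :: real\<bar> \<le> of_int M"
      using Suc.prems[of 0] by linarith
    ultimately show ?case
      using Suc.IH[of "\<lambda>j. h (Suc j)"] Suc.prems assms(5,6) by (intro base_mult_preserves_box) auto
  qed
  have "(\<lambda>m. partial m h) \<longlonglongrightarrow> radix_sum n h"
    unfolding partial_def radix_sum_def by (rule summable_LIMSEQ[OF summable_radix_sum[OF n h]])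
  then have "\<bar>Re (radix_sum n h)\<bar> \<le> A" and "\<bar>Im (radix_sum n h)\<bar> \<le> B"
    using partial_in_box[OF h]
    by (auto intro!: LIMSEQ_le_const2 tendsto_rabs tendsto_Re tendsto_Im)
  then show ?thesis ..
qed

lemma abs_Im_radix_sum_le:
  assumes n: "n \<ge> 3" and h: "\<And>j. \<bar>h j\<bar> \<le> 2 * int n ^ 2"
  shows "\<bar>Im (radix_sum n h)\<bar> \<le> 39/10"
    and "n \<ge> 5 \<Longrightarrow> \<bar>Im (radix_sum n h)\<bar> \<le> 299/100"
proof -
  let ?r = "real n"
  have box: "\<bar>Im (radix_sum n h)\<bar> \<le> B"
    if "B \<ge> 0" and "B + ?r / 2 \<le> ?r ^ 2 / 2 + 5/2"
      and "2 * ?r ^ 2 + 2 * ?r + 5/2 + B * ?r \<le> B * ?r ^ 2 + B"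
    for B :: real
  proof -
    let ?A = "2 * ?r + 5/2"
    have "?r * (?A + 2 * ?r ^ 2) + B = 2 * ?r ^ 3 + 2 * ?r ^ 2 + 5/2 * ?r + B"
      and "?A * (?r ^ 2 + 1) = 2 * ?r ^ 3 + 5/2 * ?r ^ 2 + 2 * ?r + 5/2"
      and "B * (?r ^ 2 + 1) = B * ?r ^ 2 + B"
      by (simp_all add: algebra_simps power2_eq_square power3_eq_cube)
    then have "\<bar>Re (radix_sum n h)\<bar> \<le> ?A \<and> \<bar>Im (radix_sum n h)\<bar> \<le> B"
      using n that by (intro radix_sum_in_box[OF _ h]) (simp_all add: mult.commute)
    then show ?thesis ..
  qed
  have "?r \<ge> 3" and "?r ^ 2 \<ge> 6 * ?r - 9"
    using n zero_le_power2[of "?r - 3"] by (simp_all add: power2_eq_square algebra_simps)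
  then show "\<bar>Im (radix_sum n h)\<bar> \<le> 39/10"
    by (intro box) linarith+
  assume n5: "n \<ge> 5"
  have "?r \<ge> 5" and "?r ^ 2 \<ge> 10 * ?r - 25"
    using n5 zero_le_power2[of "?r - 5"] by (simp_all add: power2_eq_square algebra_simps)
  then show "\<bar>Im (radix_sum n h)\<bar> \<le> 299/100"
    by (intro box) linarith+
qed

lemma abs_Im_radix_sum_2_le:
  assumes "\<And>j. \<bar>h j\<bar> \<le> 8"
  shows "\<bar>Im (radix_sum 2 h)\<bar> \<le> 5"
  using radix_sum_in_box[where A = 7 and B = 5 and M = 8] assms by simp

lemma radix_sum_eq_0_leading_digit:
  assumes n: "n \<ge> 2" and h: "\<And>j. \<bar>h j\<bar> \<le> 2 * int n ^ 2" and zero: "radix_sum n h = 0"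
  shows "\<bar>h 0\<bar> \<le> (if n \<ge> 5 then 2 else 3)"
proof -
  have n1: "n \<ge> 1" using n by simp
  have "radix_sum n (\<lambda>j. h (Suc j)) = - of_int (h 0)"
    using base_mult_radix_sum[where h = h, OF n1 h] zero by (simp add: add_eq_0_iff)
  moreover have "base n * radix_sum n (\<lambda>j. h (Suc j))
                 = of_int (h 1) + radix_sum n (\<lambda>j. h (Suc (Suc j)))"
    using base_mult_radix_sum[OF n1, of "\<lambda>j. h (Suc j)" "2 * int n ^ 2"] h by simp
  ultimately have tail2: "radix_sum n (\<lambda>j. h (Suc (Suc j))) = - base n * of_int (h 0) - of_int (h 1)"
    by (simp add: algebra_simps)
  have Im_tail2: "Im (radix_sum n (\<lambda>j. h (Suc (Suc j)))) = - of_int (h 0)"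
    unfolding tail2 by (simp add: base_def)
  consider "n \<ge> 5" | "n = 3 \<or> n = 4" | "n = 2" using n by linarith
  then show ?thesis
  proof cases
    case 1
    then have "\<bar>real_of_int (h 0)\<bar> \<le> 299/100"
      using abs_Im_radix_sum_le(2)[of n "\<lambda>j. h (Suc (Suc j))"] h Im_tail2 by simp
    with 1 show ?thesis by simp
  next
    case 2
    then have "\<bar>real_of_int (h 0)\<bar> \<le> 39/10"
      using abs_Im_radix_sum_le(1)[of n "\<lambda>j. h (Suc (Suc j))"] h Im_tail2 by auto
    with 2 show ?thesis by auto
  next
    case 3
    have h2: "\<And>j. \<bar>h j\<bar> \<le> 8" using h 3 by simp
    have "base 2 * radix_sum 2 (\<lambda>j. h (Suc (Suc j)))
          = of_int (h 2) + radix_sum 2 (\<lambda>j. h (Suc (Suc (Suc j))))"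
      using base_mult_radix_sum[of 2 "\<lambda>j. h (Suc (Suc j))" 8] h2 by (simp add: numeral_2_eq_2)
    then have "radix_sum 2 (\<lambda>j. h (Suc (Suc (Suc j))))
               = base 2 * radix_sum 2 (\<lambda>j. h (Suc (Suc j))) - of_int (h 2)"
      by (simp add: algebra_simps)
    then have "Im (radix_sum 2 (\<lambda>j. h (Suc (Suc (Suc j))))) = 4 * of_int (h 0) - of_int (h 1)"
      using tail2 3 by (simp add: base_def)
    then have "\<bar>4 * real_of_int (h 0) - of_int (h 1)\<bar> \<le> 5"
      using abs_Im_radix_sum_2_le[of "\<lambda>j. h (Suc (Suc (Suc j)))"] h2 by simp
    moreover have "\<bar>real_of_int (h 1)\<bar> \<le> 8" using h2[of 1] by linarith
    ultimately show ?thesis using 3 by simp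
  qed
qed

lemma radix_sum_eq_0_shift:
  assumes "n \<ge> 1" and "\<And>j. \<bar>h j\<bar> \<le> M" and "radix_sum n h = 0" and "\<forall>j<k. h j = 0"
  shows "radix_sum n (\<lambda>j. h (j + k)) = 0"
proof -
  have "(\<Sum>j<k. of_int (h j) * inverse (base n) ^ Suc j) = (0 :: complex)"
    using assms(4) by (intro sum.neutral) simp
  then have "inverse (base n) ^ k * radix_sum n (\<lambda>j. h (j + k)) = 0"
    using radix_sum_split[of n h M k] assms by simp
  then show ?thesis
    using base_nonzero[of n] by simp
qed

lemma radix_sum_eq_0_first_nonzero_digit:
  assumes "n \<ge> 2" and h: "\<And>j. \<bar>h j\<bar> \<le> 2 * int n ^ 2" and "radix_sum n h = 0" and "\<forall>j<k. h j = 0"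
  shows "\<bar>h k\<bar> \<le> (if n \<ge> 5 then 2 else 3)"
proof -
  have "radix_sum n (\<lambda>j. h (j + k)) = 0"
    by (intro radix_sum_eq_0_shift[of n h "2 * int n ^ 2" k]) (use assms in auto)
  then show ?thesis
    using radix_sum_eq_0_leading_digit[of n "\<lambda>j. h (j + k)"] assms(1) h by simp
qed

lemma tile_memE:
  assumes x: "x \<in> tile n ds" and n: "n \<ge> 1" and ds: "\<forall>\<delta>\<in>set ds. \<bar>\<delta>\<bar> \<le> int n ^ 2"
  obtains s where "\<forall>j<length ds. s j = ds ! j" and "\<And>j. \<bar>s j\<bar> \<le> int n ^ 2" and "x = radix_sum n s"
proof -
  let ?k = "length ds"
  obtain d where d: "\<forall>j. d j \<in> {- int (n^2) .. int (n^2)}"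
    and x_eq: "x = (\<Sum>j<?k. of_int (ds ! j) * inverse (base n) ^ Suc j) + inverse (base n) ^ ?k * radix_sum n d"
    using x unfolding tile_def attractor_def radix_sum_def by blast
  define s where "s j = (if j < ?k then ds ! j else d (j - ?k))" for j
  have s_bound: "\<bar>s j\<bar> \<le> int n ^ 2" for j
    using ds d[rule_format, of "j - ?k"] by (auto simp: s_def)
  have "radix_sum n s = (\<Sum>j<?k. of_int (s j) * inverse (base n) ^ Suc j)
                        + inverse (base n) ^ ?k * radix_sum n (\<lambda>j. s (j + ?k))"
    using radix_sum_split[of n s "int n ^ 2" ?k] n s_bound by blast
  also have "\<dots> = x"
    unfolding x_eq by (simp add: s_def)
  finally show ?thesis
    using that[of s] s_bound by (simp add: s_def)
qed

lemma tiles_meet_imp_radix_sum_eq_0: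
  assumes "x \<in> tile n ds" "x \<in> tile n ds'" and n: "n \<ge> 1" and "length ds = length ds'"
    and "\<forall>\<delta>\<in>set ds. \<bar>\<delta>\<bar> \<le> int n ^ 2" "\<forall>\<delta>\<in>set ds'. \<bar>\<delta>\<bar> \<le> int n ^ 2"
  obtains h where "\<forall>j<length ds. h j = ds ! j - ds' ! j" and "\<And>j. \<bar>h j\<bar> \<le> 2 * int n ^ 2"
    and "radix_sum n h = 0"
proof -
  obtain s where s: "\<forall>j<length ds. s j = ds ! j" "\<And>j. \<bar>s j\<bar> \<le> int n ^ 2" "x = radix_sum n s"
    using tile_memE[OF assms(1) n assms(5)] by blast
  obtain s' where s': "\<forall>j<length ds'. s' j = ds' ! j" "\<And>j. \<bar>s' j\<bar> \<le> int n ^ 2" "x = radix_sum n s'"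
    using tile_memE[OF assms(2) n assms(6)] by blast
  have "radix_sum n (\<lambda>j. s j - s' j) = 0"
    using radix_sum_diff[of n s "int n ^ 2" s' "int n ^ 2"] n s s' by simp
  moreover have "\<bar>s j - s' j\<bar> \<le> 2 * int n ^ 2" for j
    using s(2)[of j] s'(2)[of j] by linarith
  ultimately show ?thesis
    using s(1) s'(1) assms(4) by (intro that[of "\<lambda>j. s j - s' j"]) auto
qed

lemma tiles_meet_imp_first_difference_small:
  assumes "x \<in> tile n ds" "x \<in> tile n ds'" and n: "n \<ge> 2" and len: "length ds = length ds'"
    and "\<forall>\<delta>\<in>set ds. \<bar>\<delta>\<bar> \<le> int n ^ 2" "\<forall>\<delta>\<in>set ds'. \<bar>\<delta>\<bar> \<le> int n ^ 2"
    and k: "k < length ds" and agree: "\<forall>j<k. ds ! j = ds' ! j"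
  shows "\<bar>ds ! k - ds' ! k\<bar> \<le> (if n \<ge> 5 then 2 else 3)"
proof -
  obtain h where h_digits: "\<forall>j<length ds. h j = ds ! j - ds' ! j"
    and h: "\<And>j. \<bar>h j\<bar> \<le> 2 * int n ^ 2" and zero: "radix_sum n h = 0"
    by (rule tiles_meet_imp_radix_sum_eq_0[of x n ds ds']) (use assms in auto)
  have "\<forall>j<k. h j = 0" using h_digits agree k by simp
  then show ?thesis
    using radix_sum_eq_0_first_nonzero_digit[of n h k] n h zero h_digits k by simp
qed

lemma abs_le_of_mem_diffset:
  assumes "D \<subseteq> {0 .. m}" and "x \<in> diffset D"
  shows "\<bar>x\<bar> \<le> m"
proof -
  obtain d d' where "x = d - d'" "d \<in> D" "d' \<in> D"
    using assms(2) unfolding diffset_def by blast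
  moreover from this(2,3) assms(1) have "d \<in> {0..m}" "d' \<in> {0..m}" by auto
  ultimately show ?thesis by auto
qed

theorem lemma4p8:
  fixes n k :: nat and D :: "int set" and ds ds' :: "int list"
  assumes "n \<ge> 2"
    and "D \<subseteq> {0 .. int (n^2)}"
    and "sparse n (diffset D)"
    and "k \<ge> 1"
    and "length ds = k" and "length ds' = k"
    and "set ds \<subseteq> diffset D" and "set ds' \<subseteq> diffset D"
    and "\<exists>j<k. ds ! j \<noteq> ds' ! j"
  shows "tile n ds \<inter> tile n ds' = {}"
proof (rule equals0I)
  fix x assume x: "x \<in> tile n ds \<inter> tile n ds'"
  have digits: "\<forall>\<delta>\<in>set ds. \<bar>\<delta>\<bar> \<le> int n ^ 2" "\<forall>\<delta>\<in>set ds'. \<bar>\<delta>\<bar> \<le> int n ^ 2"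
    using abs_le_of_mem_diffset[OF assms(2)] assms(7,8) by auto
  obtain j0 where j0: "j0 < k" "ds ! j0 \<noteq> ds' ! j0" and agree: "\<forall>j<j0. ds ! j = ds' ! j"
    using assms(9) exists_least_iff[of "\<lambda>j. j < k \<and> ds ! j \<noteq> ds' ! j"] by force
  have "ds ! j0 \<in> diffset D" "ds' ! j0 \<in> diffset D"
    using assms(5-8) j0(1) by (metis nth_mem subsetD)+
  then have "if n \<ge> 5 then \<bar>ds ! j0 - ds' ! j0\<bar> > 2 else \<bar>ds ! j0 - ds' ! j0\<bar> > 3"
    using assms(3)[unfolded sparse_def, rule_format] j0(2) by blast
  moreover have "\<bar>ds ! j0 - ds' ! j0\<bar> \<le> (if n \<ge> 5 then 2 else 3)"
    using tiles_meet_imp_first_difference_small[of x n ds ds' j0] x assms(1,5,6) digits j0(1) agree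
    by simp
  ultimately show False by (simp split: if_splits)
qed

end
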